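(* Let $\tau\subset\mathbb{Z}^4_{\ge0}$ be a B-facet which has a $1$-dimensional V-face $F$ that is not a B-face. Then $\tau$ is a $B_1$-facet, or a $B_2$-facet, or a flat border.
   Context: A polytope is a finite subset of $\mathbb{Z}^n$; its dimension is the dimension of its affine span; a face of a finite set $S$ is $S\cap G$ for a face $G$ of the convex hull of $S$. A $k$-simplex is a set of $k+1$ affinely independent points; a $k$-simplex $S\subset\mathbb{Z}^m_{\ge0}$ is a B-simplex if there is an index $i$ with exactly $k$ vertices in $\{x_i=0\}$ and the remaining vertex having $x_i=1$. A B-facet in $\mathbb{Z}^n_{\ge0}$ is a finite set $\tau\subset\mathbb{Z}^n_{\ge0}$ whose affine span is a hyperplane $\{\langle a,x\rangle=b\}$ with all $a_j>0$, such that every $(n-1)$-simplex with vertices in $\tau$ is a B-simplex. A face $F$ of $\tau$ is a V-face if it is contained in a coordinate subspace $E$ (linear span of some standard basis vectors) with $\dim E=\dim F+1$; such $F$ is a B-face if every $(\dim F)$-simplex with vertices in $F$ is a B-simplex when regarded as a subset of $\mathbb{Z}^{E}_{\ge0}\cong\mathbb{Z}^{\dim E}_{\ge0}$ (using only the coordinates of $E$). For $\tau\subset\mathbb{Z}^4_{\ge0}$: $\tau$ is a $B_1$-facet if for some $i$ exactly one point has nonzero $x_i$, with $x_i=1$; a $B_2$-facet if for some distinct $i,j$ all $x\in\tau$ have $(x_i,x_j)\in\{(0,0),(1,0),(0,1)\}$; a flat border if there are distinct $i,j$ and $C\in\tau$ with $C_i=C_j=1$ such that $\tau$ contains at least two distinct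 points with $x_i=x_j=0$ and every point of $\tau$ other than $C$ lies in $\{x_i=0\}\cup\{x_j=0\}$. *)

theory Defs
  imports "HOL-Analysis.Analysis"
begin

text \<open>Lattice points of Z^4_{>=0} are represented as points of real^4 all of whose
  coordinates are nonnegative integers.\<close>

type_synonym pt = "real ^ 4"

definition lattice_nonneg :: "pt \<Rightarrow> bool" where
  "lattice_nonneg x \<longleftrightarrow> (\<forall>i. x $ i \<in> \<int> \<and> x $ i \<ge> 0)"

definition is_simplex :: "nat \<Rightarrow> pt set \<Rightarrow> bool" where
  "is_simplex k S \<longleftrightarrow> finite S \<and> card S = k + 1 \<and> \<not> affine_dependent S"

text \<open>B-simplex condition, with the distinguished index ranging over the coordinate
  index set I (I = UNIV for the ambient space, I = the index set of E for a coordinate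
  subspace E): exactly one vertex has x_i nonzero, and it has x_i = 1 (so the other
  k vertices lie in x_i = 0).\<close>
definition is_B_simplex_on :: "4 set \<Rightarrow> nat \<Rightarrow> pt set \<Rightarrow> bool" where
  "is_B_simplex_on I k S \<longleftrightarrow> is_simplex k S \<and>
     (\<exists>i\<in>I. \<exists>v\<in>S. v $ i = 1 \<and> (\<forall>w\<in>S. w \<noteq> v \<longrightarrow> w $ i = 0))"

definition is_B_facet :: "pt set \<Rightarrow> bool" where
  "is_B_facet \<tau> \<longleftrightarrow> finite \<tau> \<and> (\<forall>x\<in>\<tau>. lattice_nonneg x) \<and>
     (\<exists>a b. (\<forall>j. a $ j > 0) \<and> affine hull \<tau> = {x. a \<bullet> x = b}) \<and>
     (\<forall>S. S \<subseteq> \<tau> \<and> is_simplex 3 S \<longrightarrow> is_B_simplex_on UNIV 3 S)"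

definition face_of_set :: "pt set \<Rightarrow> pt set \<Rightarrow> bool" where
  "face_of_set \<tau> F \<longleftrightarrow> (\<exists>G. G face_of convex hull \<tau> \<and> F = \<tau> \<inter> G)"

definition coord_subspace :: "4 set \<Rightarrow> pt set" where
  "coord_subspace I = span ((\<lambda>i. axis i (1::real)) ` I)"

definition V_face_wrt :: "pt set \<Rightarrow> pt set \<Rightarrow> 4 set \<Rightarrow> bool" where
  "V_face_wrt \<tau> F I \<longleftrightarrow> face_of_set \<tau> F \<and> F \<subseteq> coord_subspace I \<and>
     int (dim (coord_subspace I)) = aff_dim F + 1"

definition is_V_face :: "pt set \<Rightarrow> pt set \<Rightarrow> bool" where
  "is_V_face \<tau> F \<longleftrightarrow> (\<exists>I. V_face_wrt \<tau> F I)"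

definition is_B_face :: "pt set \<Rightarrow> pt set \<Rightarrow> bool" where
  "is_B_face \<tau> F \<longleftrightarrow> (\<exists>I. V_face_wrt \<tau> F I \<and>
     (\<forall>S. S \<subseteq> F \<and> is_simplex (nat (aff_dim F)) S \<longrightarrow>
          is_B_simplex_on I (nat (aff_dim F)) S))"

definition is_B1_facet :: "pt set \<Rightarrow> bool" where
  "is_B1_facet \<tau> \<longleftrightarrow> (\<exists>i. \<exists>p\<in>\<tau>. p $ i = 1 \<and> (\<forall>q\<in>\<tau>. q \<noteq> p \<longrightarrow> q $ i = 0))"

definition is_B2_facet :: "pt set \<Rightarrow> bool" where
  "is_B2_facet \<tau> \<longleftrightarrow> (\<exists>i j. i \<noteq> j \<and>
     (\<forall>x\<in>\<tau>. (x $ i, x $ j) \<in> {(0,0),(1,0),(0,1)}))"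

definition is_flat_border :: "pt set \<Rightarrow> bool" where
  "is_flat_border \<tau> \<longleftrightarrow> (\<exists>i j C. i \<noteq> j \<and> C \<in> \<tau> \<and> C $ i = 1 \<and> C $ j = 1 \<and>
     (\<exists>p\<in>\<tau>. \<exists>q\<in>\<tau>. p \<noteq> q \<and> p $ i = 0 \<and> p $ j = 0 \<and> q $ i = 0 \<and> q $ j = 0) \<and>
     (\<forall>x\<in>\<tau>. x \<noteq> C \<longrightarrow> x $ i = 0 \<or> x $ j = 0))"

end

theory Submission
  imports Defs
begin

text \<open>Let the V-face F lie in the coordinate plane x_k = x_l = 0 and let {p, q} \<subseteq> F be
  an edge that is not a B-simplex there. Since \<tau> spans a hyperplane with positive normal, a
  point of \<tau> is determined by any three of its coordinates. Hence, whenever r, s \<in> \<tau> have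
  linearly independent (k, l)-projections, {p, q, r, s} is a 3-simplex whose B-index cannot be
  i or j, so in coordinate k or l one of r, s is 1 and the other is 0; such pairs exist because
  \<tau> spans the hyperplane. Playing this against the possible (k, l)-projections of \<tau> leaves
  three configurations: a unique point off some coordinate hyperplane (B_1), all projections in
  {(0, 0), (1, 0), (0, 1)} (B_2), or a point C with C_m = C_n = 1 such that every other point
  has x_m = 0 or x_n = 0 (flat border).\<close>

abbreviation coord_det :: "'n \<Rightarrow> 'n \<Rightarrow> real ^ 'n \<Rightarrow> real ^ 'n \<Rightarrow> real" where
  "coord_det k l x y \<equiv> x $ k * y $ l - x $ l * y $ k"

lemma eq_if_inner_eq_and_agree_off:
  fixes a x y :: "real ^ 'n"
  assumes "a $ m \<noteq> 0" and "a \<bullet> x = a \<bullet> y" and "\<And>n. n \<noteq> m \<Longrightarrow> x $ n = y $ n"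
  shows "x = y"
proof -
  have "a \<bullet> (x - y) = a $ m * (x $ m - y $ m)"
    unfolding inner_vec_def using assms(3) by (subst sum.remove[of _ m]) auto
  with assms(1,2) have "x $ m = y $ m"
    by (simp add: inner_diff_right)
  with assms(3) show ?thesis
    by (metis vec_eq_iff)
qed

lemma affine_independent_four:
  fixes x y z w :: "real ^ 'n"
  assumes "x \<noteq> y" "x $ k = y $ k" "x $ l = y $ l"
    and det: "coord_det k l (z - x) (w - x) \<noteq> 0"
  shows "distinct [x, y, z, w]" "\<not> affine_dependent {x, y, z, w}"
proof -
  from det assms show dist: "distinct [x, y, z, w]"
    by (auto simp: algebra_simps)
  show "\<not> affine_dependent {x, y, z, w}"
  proof
    assume "affine_dependent {x, y, z, w}"
    then obtain U where U: "sum U {x, y, z, w} = 0" "\<exists>v\<in>{x, y, z, w}. U v \<noteq> 0"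
        "(\<Sum>v\<in>{x, y, z, w}. U v *\<^sub>R v) = 0"
      by (auto simp: affine_dependent_explicit_finite)
    have "(\<Sum>v\<in>{x, y, z, w}. U v *\<^sub>R (v - x)) = (\<Sum>v\<in>{x, y, z, w}. U v *\<^sub>R v) - sum U {x, y, z, w} *\<^sub>R x"
      by (simp add: scaleR_diff_right sum_subtractf scaleR_left.sum)
    then have rel: "U y *\<^sub>R (y - x) + U z *\<^sub>R (z - x) + U w *\<^sub>R (w - x) = 0"
      using U(1,3) dist by (simp add: add.assoc)
    have "U z * (z - x) $ c + U w * (w - x) $ c = 0" if "c = k \<or> c = l" for c
      using arg_cong[OF rel, of "\<lambda>v. v $ c"] that assms(2,3) by auto
    from this[of k] this[of l] have "U z * coord_det k l (z - x) (w - x) = 0"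
        "U w * coord_det k l (z - x) (w - x) = 0"
      by (simp_all only: simp_thms) algebra+
    with det have "U z = 0" "U w = 0" by simp_all
    with rel assms(1) have "U y = 0" by simp
    with U(1,2) dist \<open>U z = 0\<close> \<open>U w = 0\<close> show False by simp
  qed
qed

lemma bilinear_zero_on_affine_hull:
  fixes g :: "real ^ 'n \<Rightarrow> real ^ 'n \<Rightarrow> real"
  assumes "\<And>y. linear (\<lambda>x. g x y)" "\<And>x. linear (\<lambda>y. g x y)"
    and "\<And>x y. x \<in> S \<Longrightarrow> y \<in> S \<Longrightarrow> g x y = 0"
    and "x \<in> affine hull S" "y \<in> affine hull S"
  shows "g x y = 0"
proof -
  have "g x' y = 0" if "y \<in> S" "x' \<in> span S" for x' y
    using real_vector.linear_eq_0_on_span[OF assms(1) _ that(2)] assms(3) that(1) by blast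
  then have "g x y' = 0" if "y' \<in> span S" for y'
    using real_vector.linear_eq_0_on_span[OF assms(2) _ that] assms(4) affine_hull_subset_span by blast
  then show ?thesis
    using assms(5) affine_hull_subset_span by blast
qed

lemma coord_det_nonzero_if_hull_hyperplane:
  fixes \<tau> :: "(real ^ 'n) set"
  assumes hull: "affine hull \<tau> = {x. a \<bullet> x = b}"
    and "a $ m \<noteq> 0" "m \<noteq> k" "m \<noteq> l" "k \<noteq> l"
  shows "\<exists>r\<in>\<tau>. \<exists>s\<in>\<tau>. coord_det k l r s \<noteq> 0"
proof (rule ccontr)
  assume none: "\<not> ?thesis"
  have zero: "coord_det k l x y = 0" if "x \<in> affine hull \<tau>" "y \<in> affine hull \<tau>" for x y
  proof (rule bilinear_zero_on_affine_hull[of "coord_det k l"])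
    show "linear (\<lambda>x. coord_det k l x y)" for y
      by (rule linearI) (simp_all add: algebra_simps)
    show "linear (\<lambda>y. coord_det k l x y)" for x
      by (rule linearI) (simp_all add: algebra_simps)
  qed (use that none in auto)
  define y :: "'n \<Rightarrow> real ^ 'n" where "y c = axis c 1 + ((b - a $ c) / a $ m) *\<^sub>R axis m 1" for c
  have "y c \<in> affine hull \<tau>" for c
    unfolding hull y_def using \<open>a $ m \<noteq> 0\<close> by (simp add: inner_add_right inner_axis)
  moreover have "coord_det k l (y k) (y l) = 1"
    unfolding y_def using assms(3-5) by (simp add: axis_def)
  ultimately show False
    using zero by fastforce
qed

definition B_index :: "'n \<Rightarrow> (real ^ 'n) set \<Rightarrow> bool" where
  "B_index m S \<longleftrightarrow> (\<exists>v\<in>S. v $ m = 1 \<and> (\<forall>w\<in>S. w \<noteq> v \<longrightarrow> w $ m = 0))"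

lemma is_B_simplex_on_iff: "is_B_simplex_on I k S \<longleftrightarrow> is_simplex k S \<and> (\<exists>m\<in>I. B_index m S)"
  unfolding is_B_simplex_on_def B_index_def by blast

lemma B_index_pair:
  "r \<noteq> s \<Longrightarrow> B_index m {r, s} \<longleftrightarrow> (r $ m = 1 \<and> s $ m = 0) \<or> (r $ m = 0 \<and> s $ m = 1)"
  unfolding B_index_def by auto

lemma dim_coord_subspace: "dim (coord_subspace I) = card I"
proof -
  have "independent ((\<lambda>i. axis i (1::real)) ` I)"
    by (rule independent_mono[OF independent_Basis]) (auto simp: Basis_vec_def)
  moreover have "card ((\<lambda>i. axis i (1::real)) ` I) = card I"
    by (rule card_image) (auto simp: inj_on_def axis_eq_axis)
  ultimately show ?thesis
    using indep_card_eq_dim_span unfolding coord_subspace_def by metis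
qed

lemma coord_subspace_nth_zero: "x \<in> coord_subspace I \<Longrightarrow> m \<notin> I \<Longrightarrow> x $ m = 0"
  unfolding coord_subspace_def
  by (induction rule: span_induct_alt) (auto simp: axis_def split: if_splits)

lemma UNIV_4_eq: "distinct [i, j, k, l :: 4] \<Longrightarrow> UNIV = {i, j, k, l}"
proof -
  assume "distinct [i, j, k, l]"
  then have "card {i, j, k, l} = card (UNIV :: 4 set)"
    by simp
  then show ?thesis
    by (metis card_subset_eq finite subset_UNIV)
qed

lemma card_2_subset_4_complement:
  fixes I :: "4 set"
  assumes "card I = 2"
  obtains i j k l where "I = {i, j}" "distinct [i, j, k, l]"
proof -
  obtain i j where ij: "I = {i, j}" "i \<noteq> j"
    using assms by (meson card_2_iff)
  then have "card (UNIV - {i, j}) = 2"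
    by (simp add: card_Diff_subset)
  then obtain k l where "UNIV - {i, j} = {k, l}" "k \<noteq> l"
    by (meson card_2_iff)
  with ij show thesis
    by (intro that[of i j k l]) (auto simp: set_eq_iff)
qed

lemma non_B_face_edge:
  assumes "is_V_face \<tau> F" "aff_dim F = 1" "\<not> is_B_face \<tau> F"
  obtains i j k l p q where "distinct [i, j, k, l]" "p \<in> \<tau>" "q \<in> \<tau>" "p \<noteq> q"
    "p $ k = 0" "p $ l = 0" "q $ k = 0" "q $ l = 0"
    "\<not> B_index i {p, q}" "\<not> B_index j {p, q}"
proof -
  obtain I where V: "V_face_wrt \<tau> F I"
    using assms(1) unfolding is_V_face_def by blast
  then have F: "F \<subseteq> \<tau>" "F \<subseteq> coord_subspace I"
    unfolding V_face_wrt_def face_of_set_def by blast+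
  from V assms(2) have "card I = 2"
    unfolding V_face_wrt_def dim_coord_subspace by simp
  then obtain i j k l where ijkl: "I = {i, j}" "distinct [i, j, k, l]"
    by (rule card_2_subset_4_complement)
  from V assms(2,3) obtain S where "S \<subseteq> F" "is_simplex 1 S" "\<not> is_B_simplex_on I 1 S"
    unfolding is_B_face_def by auto
  moreover from \<open>is_simplex 1 S\<close> obtain p q where "S = {p, q}" "p \<noteq> q"
    unfolding is_simplex_def by (metis card_2_iff one_add_one)
  ultimately show thesis
    using F ijkl coord_subspace_nth_zero[of _ I k] coord_subspace_nth_zero[of _ I l]
    by (intro that[of i j k l p q]) (auto simp: is_B_simplex_on_iff B_index_pair)
qed

locale facet_with_non_B_edge =
  fixes \<tau> :: "(real ^ 4) set" and a :: "real ^ 4" and b :: real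
    and i j k l :: 4 and p q :: "real ^ 4"
  assumes coords_distinct: "distinct [i, j, k, l]"
    and nonneg: "x \<in> \<tau> \<Longrightarrow> 0 \<le> x $ m"
    and normal_pos: "0 < a $ m"
    and on_hyperplane: "x \<in> \<tau> \<Longrightarrow> a \<bullet> x = b"
    and B_simplices: "S \<subseteq> \<tau> \<Longrightarrow> is_simplex 3 S \<Longrightarrow> \<exists>m. B_index m S"
    and independent_projections: "\<exists>r\<in>\<tau>. \<exists>s\<in>\<tau>. coord_det k l r s \<noteq> 0"
    and edge: "p \<in> \<tau>" "q \<in> \<tau>" "p \<noteq> q"
    and edge_off_kl: "p $ k = 0" "p $ l = 0" "q $ k = 0" "q $ l = 0"
    and edge_not_B: "\<not> B_index i {p, q}" "\<not> B_index j {p, q}"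
begin

lemma swap_kl: "facet_with_non_B_edge \<tau> a b i j l k p q"
proof -
  obtain r s where "r \<in> \<tau>" "s \<in> \<tau>" "coord_det l k s r \<noteq> 0"
    using independent_projections by (auto simp: algebra_simps)
  then show ?thesis
    using facet_with_non_B_edge_axioms
    unfolding facet_with_non_B_edge_def by auto
qed

lemma inner_normal: "a \<bullet> x = a $ i * x $ i + a $ j * x $ j + a $ k * x $ k + a $ l * x $ l"
  unfolding inner_vec_def UNIV_4_eq[OF coords_distinct] using coords_distinct
  by (simp add: algebra_simps)

lemma eq_if_agree_on_three:
  assumes "x \<in> \<tau>" "y \<in> \<tau>" "x $ k = y $ k" "x $ l = y $ l" "m \<in> {i, j}" "x $ m = y $ m"
  shows "x = y"
proof -
  obtain m' where "m' \<in> {i, j}" "m' \<noteq> m" "\<And>n. n \<noteq> m' \<Longrightarrow> n \<in> {m, k, l}"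
    using assms(5) coords_distinct UNIV_4_eq[OF coords_distinct] by auto
  with assms show ?thesis
    using on_hyperplane normal_pos
    by (intro eq_if_inner_eq_and_agree_off[of a m']) (auto simp: less_imp_neq[symmetric])
qed

lemma edge_same_projection: "p $ k = q $ k" "p $ l = q $ l"
  using edge_off_kl by simp_all

lemma edge_nonzero: "m \<in> {i, j} \<Longrightarrow> p $ m \<noteq> 0 \<or> q $ m \<noteq> 0"
  using eq_if_agree_on_three[OF edge(1,2)] edge(3) edge_off_kl by force

lemma B_index_of_four:
  assumes "{w1, w2, w3, w4} \<subseteq> \<tau>" "distinct [w1, w2, w3, w4]" "\<not> affine_dependent {w1, w2, w3, w4}"
  shows "\<exists>m. B_index m {w1, w2, w3, w4}"
  using B_simplices[OF assms(1)] assms(2,3) unfolding is_simplex_def by auto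

lemma zero_one_in_k_or_l:
  assumes "r \<in> \<tau>" "s \<in> \<tau>" "coord_det k l r s \<noteq> 0"
  shows "(r $ k = 1 \<and> s $ k = 0) \<or> (r $ k = 0 \<and> s $ k = 1) \<or>
         (r $ l = 1 \<and> s $ l = 0) \<or> (r $ l = 0 \<and> s $ l = 1)"
proof -
  have det: "coord_det k l (r - p) (s - p) \<noteq> 0"
    using assms(3) edge_off_kl by simp
  note simplex = affine_independent_four[OF edge(3) edge_same_projection det]
  then obtain m where m: "B_index m {p, q, r, s}"
    using B_index_of_four assms(1,2) edge(1,2) by blast
  \<comment> \<open>A B-index in {i, j} would make {p, q} a B-edge or identify p and q.\<close>
  show ?thesis
  proof (cases "m \<in> {i, j}")
    case True
    with m edge_not_B edge_nonzero simplex(1) show ?thesis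
      unfolding B_index_def by (auto simp: B_index_pair)
  next
    case False
    then have "m = k \<or> m = l"
      using UNIV_4_eq[OF coords_distinct] by auto
    with m edge_off_kl simplex(1) show ?thesis
      unfolding B_index_def by auto
  qed
qed

lemma same_projection_pair_index:
  assumes f: "f \<in> \<tau>" "f $ k = 0" "f $ l = 0"
    and r: "r \<in> \<tau>" "r' \<in> \<tau>" "r \<noteq> r'" "r $ k = r' $ k" "r $ l = r' $ l"
    and s: "s \<in> \<tau>" "coord_det k l r s \<noteq> 0" "r $ k \<noteq> 0 \<or> s $ k \<noteq> 1" "r $ l \<noteq> 0 \<or> s $ l \<noteq> 1"
  obtains m where "m \<in> {i, j}" "f $ m = 0" "s $ m = 0" "B_index m {r, r'}"
proof -
  have "coord_det k l (f - r) (s - r) \<noteq> 0"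
    using s(2) f(2,3) by (simp add: algebra_simps)
  note simplex = affine_independent_four[OF r(3-5) this]
  then obtain m where m: "B_index m {r, r', f, s}"
    using B_index_of_four f(1) r(1,2) s(1) by blast
  have "r $ m \<noteq> r' $ m" if "m \<in> {i, j}"
    using eq_if_agree_on_three[OF r(1,2,4,5) that] r(3) by blast
  moreover have "\<not> B_index c {r, r', f, s}" if "c = k \<or> c = l" for c
    using that simplex(1) f(2,3) r(4,5) s(3,4) unfolding B_index_def by auto
  with m have "m \<in> {i, j}"
    using UNIV_4_eq[OF coords_distinct] by blast
  ultimately show thesis
    using m simplex(1) by (intro that) (auto simp: B_index_def B_index_pair)
qed

lemma same_projection_pair:
  assumes r: "r \<in> \<tau>" "r' \<in> \<tau>" "r \<noteq> r'" "r $ k = r' $ k" "r $ l = r' $ l"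
    and s: "s \<in> \<tau>" "coord_det k l r s \<noteq> 0" "r $ k \<noteq> 0 \<or> s $ k \<noteq> 1" "r $ l \<noteq> 0 \<or> s $ l \<noteq> 1"
  shows "s $ i = 0" "s $ j = 0" "B_index i {r, r'}" "p $ i = 0 \<or> q $ i = 0"
proof -
  obtain m where m: "m \<in> {i, j}" "p $ m = 0" "s $ m = 0" "B_index m {r, r'}"
    using same_projection_pair_index[OF edge(1) edge_off_kl(1,2) r s] .
  obtain m' where m': "m' \<in> {i, j}" "q $ m' = 0" "s $ m' = 0" "B_index m' {r, r'}"
    using same_projection_pair_index[OF edge(2) edge_off_kl(3,4) r s] .
  have "m \<noteq> m'"
    using edge_nonzero m m' by blast
  with m(1) m'(1) have "{m, m'} = {i, j}"
    by auto
  with m m' show "s $ i = 0" "s $ j = 0" "B_index i {r, r'}" "p $ i = 0 \<or> q $ i = 0"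
    by (auto simp: doubleton_eq_iff)
qed

lemma B1_or_flat_border_if_k_points_agree:
  assumes s: "s \<in> \<tau>" "s $ k = 0" "s $ l \<noteq> 0" "s $ l \<noteq> 1 \<or> e \<noteq> 0"
    and x0: "x0 \<in> \<tau>" "x0 $ k \<noteq> 0"
    and k_points: "\<And>x. x \<in> \<tau> \<Longrightarrow> x $ k \<noteq> 0 \<Longrightarrow> x $ k = 1 \<and> x $ l = e"
  shows "is_B1_facet \<tau> \<or> is_flat_border \<tau>"
proof (cases "\<forall>y\<in>\<tau>. y \<noteq> x0 \<longrightarrow> y $ k = 0")
  case True
  then have "is_B1_facet \<tau>"
    unfolding is_B1_facet_def using k_points x0 by blast
  then show ?thesis ..
next
  case False
  then obtain y where y: "y \<in> \<tau>" "y \<noteq> x0" "y $ k \<noteq> 0"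
    by blast
  have pair: "s $ i = 0" "B_index i {z, z'}" "p $ i = 0 \<or> q $ i = 0"
    if "z \<in> \<tau>" "z' \<in> \<tau>" "z \<noteq> z'" "z $ k \<noteq> 0" "z' $ k \<noteq> 0" for z z'
  proof -
    have "z $ k = 1" "z $ l = e" "z' $ k = 1" "z' $ l = e"
      using k_points that by auto
    then show "s $ i = 0" "B_index i {z, z'}" "p $ i = 0 \<or> q $ i = 0"
      using same_projection_pair[of z z' s] that s by auto
  qed
  obtain C where C: "C \<in> \<tau>" "C $ i = 1" "C $ k = 1"
    using pair(2)[OF x0(1) y(1) y(2)[symmetric] x0(2) y(3)] k_points x0 y
    by (auto simp: B_index_pair)
  obtain p' where p': "p' \<in> \<tau>" "p' $ i = 0" "p' $ k = 0" "p' $ l = 0"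
    using pair(3)[OF x0(1) y(1) y(2)[symmetric] x0(2) y(3)] edge edge_off_kl by blast
  have others: "x $ i = 0 \<or> x $ k = 0" if "x \<in> \<tau>" "x \<noteq> C" for x
    using pair(2)[OF C(1) that(1) that(2)[symmetric]] C that by (auto simp: B_index_pair)
  have "s \<noteq> p'" "s $ i = 0"
    using s(3) p'(4) pair(1)[OF x0(1) y(1) y(2)[symmetric] x0(2) y(3)] by auto
  then have "is_flat_border \<tau>"
    unfolding is_flat_border_def using coords_distinct C p' s others
    by (intro exI[of _ i] exI[of _ k] exI[of _ C]) auto
  then show ?thesis ..
qed

lemma coord_det_zero_if_off_axes:
  assumes "x \<in> \<tau>" "y \<in> \<tau>" "x $ k \<noteq> 0" "x $ l \<noteq> 0" "y $ k \<noteq> 0" "y $ l \<noteq> 0"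
  shows "coord_det k l x y = 0"
  using zero_one_in_k_or_l[OF assms(1,2)] assms(3-6) by auto

lemma l_unit_if_k_axis_point:
  assumes "x \<in> \<tau>" "x $ k \<noteq> 0" "x $ l \<noteq> 0" "s \<in> \<tau>" "s $ l = 0" "s $ k \<noteq> 0"
  shows "x $ l = 1"
  using zero_one_in_k_or_l[OF assms(1,4)] assms(2,3,5,6) by auto

lemma flat_border_if_both_axes_occupied:
  assumes C: "C \<in> \<tau>" "C $ k \<noteq> 0" "C $ l \<noteq> 0"
    and s1: "s1 \<in> \<tau>" "s1 $ l = 0" "s1 $ k \<noteq> 0"
    and s2: "s2 \<in> \<tau>" "s2 $ k = 0" "s2 $ l \<noteq> 0"
  shows "is_flat_border \<tau>"
proof -
  have unit: "x $ k = 1 \<and> x $ l = 1" if "x \<in> \<tau>" "x $ k \<noteq> 0" "x $ l \<noteq> 0" for x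
    using l_unit_if_k_axis_point[OF that s1]
      facet_with_non_B_edge.l_unit_if_k_axis_point[OF swap_kl that(1,3,2) s2] by simp
  have "0 \<le> a $ i * C $ i" "0 \<le> a $ j * C $ j"
    using nonneg[OF C(1)] normal_pos by (simp_all add: less_imp_le)
  then have b_ge: "a $ k + a $ l \<le> b"
    using on_hyperplane[OF C(1)] unit[OF C] unfolding inner_normal by simp
  have "s1 $ k = 1 \<or> s2 $ l = 1"
    using zero_one_in_k_or_l[OF s1(1) s2(1)] s1 s2 by auto
  have unique: "x = C" if x: "x \<in> \<tau>" "x $ k \<noteq> 0" "x $ l \<noteq> 0" for x
  proof (rule ccontr)
    \<comment> \<open>A second point projecting to (1, 1) forces s1, s2 onto the (k, l)-plane, where the
      hyperplane equation gives b \<le> a_k or b \<le> a_l.\<close>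
    assume "x \<noteq> C"
    have "s1 $ i = 0" "s1 $ j = 0" "s2 $ i = 0" "s2 $ j = 0"
      using same_projection_pair(1,2)[OF C(1) x(1) \<open>x \<noteq> C\<close>[symmetric]] unit[OF C] unit[OF x] s1 s2
      by auto
    then have "b = a $ k * s1 $ k" "b = a $ l * s2 $ l"
      using on_hyperplane[OF s1(1)] on_hyperplane[OF s2(1)] s1(2) s2(2) unfolding inner_normal by simp_all
    then have "b \<le> a $ k \<or> b \<le> a $ l"
      using \<open>s1 $ k = 1 \<or> s2 $ l = 1\<close> by auto
    with b_ge normal_pos[of k] normal_pos[of l] show False
      by linarith
  qed
  have "\<forall>x\<in>\<tau>. x \<noteq> C \<longrightarrow> x $ k = 0 \<or> x $ l = 0"
    using unique by blast
  moreover have "\<exists>p\<in>\<tau>. \<exists>q\<in>\<tau>. p \<noteq> q \<and> p $ k = 0 \<and> p $ l = 0 \<and> q $ k = 0 \<and> q $ l = 0"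
    using edge edge_off_kl by blast
  ultimately show ?thesis
    unfolding is_flat_border_def using coords_distinct C(1) unit[OF C]
    by (intro exI[of _ k] exI[of _ l] exI[of _ C]) simp
qed

lemma B1_or_flat_border_if_no_k_axis_point:
  assumes C: "C \<in> \<tau>" "C $ k \<noteq> 0" "C $ l \<noteq> 0"
    and no_k_axis: "\<And>x. x \<in> \<tau> \<Longrightarrow> x $ l = 0 \<Longrightarrow> x $ k = 0"
    and s: "s \<in> \<tau>" "s $ k = 0" "s $ l \<noteq> 0"
  shows "is_B1_facet \<tau> \<or> is_flat_border \<tau>"
proof -
  have unit: "x $ k = 1" if "x \<in> \<tau>" "x $ k \<noteq> 0" for x
    using facet_with_non_B_edge.l_unit_if_k_axis_point[OF swap_kl that(1) _ that(2) s] no_k_axis that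
    by blast
  have "x $ k = 1 \<and> x $ l = C $ l" if "x \<in> \<tau>" "x $ k \<noteq> 0" for x
  proof -
    have "x $ l \<noteq> 0"
      using no_k_axis that by blast
    then show ?thesis
      using coord_det_zero_if_off_axes[OF that(1) C(1) that(2) _ C(2,3)] unit[OF that] unit[OF C(1,2)]
      by simp
  qed
  then show ?thesis
    using B1_or_flat_border_if_k_points_agree[OF s _ C(1,2)] C(3) by blast
qed

lemma B1_or_flat_border_if_off_axes_point:
  assumes C: "C \<in> \<tau>" "C $ k \<noteq> 0" "C $ l \<noteq> 0"
  shows "is_B1_facet \<tau> \<or> is_flat_border \<tau>"
proof -
  obtain s where s: "s \<in> \<tau>" "coord_det k l C s \<noteq> 0"
  proof -
    obtain r0 s0 where r0s0: "r0 \<in> \<tau>" "s0 \<in> \<tau>" "coord_det k l r0 s0 \<noteq> 0"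
      using independent_projections by blast
    have "C $ k * coord_det k l r0 s0 = r0 $ k * coord_det k l C s0 - s0 $ k * coord_det k l C r0"
      by (simp add: algebra_simps)
    with r0s0(3) C(2) have "coord_det k l C s0 \<noteq> 0 \<or> coord_det k l C r0 \<noteq> 0"
      by auto
    with r0s0(1,2) that show thesis
      by blast
  qed
  then have s_axis: "s $ k = 0 \<or> s $ l = 0"
    using coord_det_zero_if_off_axes[OF C(1) s(1) C(2,3)] by auto
  consider (both) s1 s2 where "s1 \<in> \<tau>" "s1 $ l = 0" "s1 $ k \<noteq> 0" "s2 \<in> \<tau>" "s2 $ k = 0" "s2 $ l \<noteq> 0"
    | (no_k_axis) "\<And>x. x \<in> \<tau> \<Longrightarrow> x $ l = 0 \<Longrightarrow> x $ k = 0"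
    | (no_l_axis) "\<And>x. x \<in> \<tau> \<Longrightarrow> x $ k = 0 \<Longrightarrow> x $ l = 0"
    by blast
  then show ?thesis
  proof cases
    case both
    then show ?thesis
      using flat_border_if_both_axes_occupied[OF C] by blast
  next
    case no_k_axis
    with s s_axis show ?thesis
      using B1_or_flat_border_if_no_k_axis_point[OF C no_k_axis] by force
  next
    case no_l_axis
    with s s_axis show ?thesis
      using facet_with_non_B_edge.B1_or_flat_border_if_no_k_axis_point[OF swap_kl C(1,3,2) no_l_axis]
      by force
  qed
qed

lemma B1_or_flat_border_if_l_nonunit:
  assumes on_axes: "\<And>x. x \<in> \<tau> \<Longrightarrow> x $ k = 0 \<or> x $ l = 0"
    and t: "t \<in> \<tau>" "t $ l \<noteq> 0" "t $ l \<noteq> 1"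
    and x0: "x0 \<in> \<tau>" "x0 $ k \<noteq> 0"
  shows "is_B1_facet \<tau> \<or> is_flat_border \<tau>"
proof -
  have "t $ k = 0"
    using on_axes t by auto
  moreover have "x $ k = 1 \<and> x $ l = 0" if "x \<in> \<tau>" "x $ k \<noteq> 0" for x
    using zero_one_in_k_or_l[OF that(1) t(1)] on_axes[OF that(1)] that t(2,3) \<open>t $ k = 0\<close> by auto
  ultimately show ?thesis
    using B1_or_flat_border_if_k_points_agree[OF t(1) _ t(2) _ x0] t(3) by blast
qed

lemma trichotomy_if_on_axes:
  assumes on_axes: "\<And>x. x \<in> \<tau> \<Longrightarrow> x $ k = 0 \<or> x $ l = 0"
  shows "is_B1_facet \<tau> \<or> is_B2_facet \<tau> \<or> is_flat_border \<tau>"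
proof -
  obtain r s where "r \<in> \<tau>" "s \<in> \<tau>" "coord_det k l r s \<noteq> 0"
    using independent_projections by blast
  moreover from this(3) have "(r $ k \<noteq> 0 \<or> s $ k \<noteq> 0) \<and> (r $ l \<noteq> 0 \<or> s $ l \<noteq> 0)"
    by auto
  ultimately obtain xk xl where x: "xk \<in> \<tau>" "xk $ k \<noteq> 0" "xl \<in> \<tau>" "xl $ l \<noteq> 0"
    by blast
  consider (l_nonunit) t where "t \<in> \<tau>" "t $ l \<noteq> 0" "t $ l \<noteq> 1"
    | (k_nonunit) t where "t \<in> \<tau>" "t $ k \<noteq> 0" "t $ k \<noteq> 1"
    | (units) "\<And>x. x \<in> \<tau> \<Longrightarrow> x $ k \<in> {0, 1} \<and> x $ l \<in> {0, 1}"
    by blast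
  then show ?thesis
  proof cases
    case l_nonunit
    then show ?thesis
      using B1_or_flat_border_if_l_nonunit[OF on_axes _ _ _ x(1,2)] by blast
  next
    case k_nonunit
    then show ?thesis
      using facet_with_non_B_edge.B1_or_flat_border_if_l_nonunit[OF swap_kl _ _ _ _ x(3,4)] on_axes
      by blast
  next
    case units
    then have "\<forall>x\<in>\<tau>. (x $ k, x $ l) \<in> {(0, 0), (1, 0), (0, 1)}"
      using on_axes by fastforce
    then show ?thesis
      unfolding is_B2_facet_def using coords_distinct by auto
  qed
qed

theorem B1_or_B2_or_flat_border: "is_B1_facet \<tau> \<or> is_B2_facet \<tau> \<or> is_flat_border \<tau>"
  using B1_or_flat_border_if_off_axes_point trichotomy_if_on_axes by blast

end

theorem lemma2p8:
  fixes \<tau> F :: "(real ^ 4) set"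
  assumes "is_B_facet \<tau>"
    and "is_V_face \<tau> F" and "aff_dim F = 1" and "\<not> is_B_face \<tau> F"
  shows "is_B1_facet \<tau> \<or> is_B2_facet \<tau> \<or> is_flat_border \<tau>"
proof -
  obtain a b where lattice: "\<forall>x\<in>\<tau>. lattice_nonneg x" and normal_pos: "\<forall>m. 0 < a $ m"
    and hull: "affine hull \<tau> = {x. a \<bullet> x = b}"
    and B_simplices: "\<forall>S. S \<subseteq> \<tau> \<and> is_simplex 3 S \<longrightarrow> is_B_simplex_on UNIV 3 S"
    using assms(1) unfolding is_B_facet_def by blast
  obtain i j k l p q where ijkl: "distinct [i, j, k, l]" and edge: "p \<in> \<tau>" "q \<in> \<tau>" "p \<noteq> q"
    "p $ k = 0" "p $ l = 0" "q $ k = 0" "q $ l = 0" "\<not> B_index i {p, q}" "\<not> B_index j {p, q}"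
    using non_B_face_edge[OF assms(2-4)] .
  have "facet_with_non_B_edge \<tau> a b i j k l p q"
  proof
    show "0 \<le> x $ m" if "x \<in> \<tau>" for x m
      using lattice that unfolding lattice_nonneg_def by blast
    show "a \<bullet> x = b" if "x \<in> \<tau>" for x
      using hull_inc[OF that, of affine] hull by blast
    show "\<exists>m. B_index m S" if "S \<subseteq> \<tau>" "is_simplex 3 S" for S
      using B_simplices that is_B_simplex_on_iff by blast
    show "\<exists>r\<in>\<tau>. \<exists>s\<in>\<tau>. coord_det k l r s \<noteq> 0"
      using coord_det_nonzero_if_hull_hyperplane[OF hull, of i k l] normal_pos[rule_format, of i] ijkl
      by force
  qed (use ijkl normal_pos edge in auto)
  then show ?thesis
    by (rule facet_with_non_B_edge.B1_or_B2_or_flat_border)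
qed

end
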